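(* Let $G$ be a group and $\mathcal{B}_1,\mathcal{B}_2:G\to G$ maps such that the operation $a\circ b=\mathcal{B}_1(a)b\mathcal{B}_2(a)$ is associative. Then for every $a\in G$, the element $e_a=\mathcal{B}_1(a)^{-1}a\mathcal{B}_2(a)^{-1}$ is a left identity of the semigroup $(G,\circ)$, i.e. $e_a\circ b=b$ for all $b\in G$. Moreover, if $(G,\mathcal{B}_1,\mathcal{B}_2)$ is a Rota-Baxter system of groups, then $\mathcal{B}_1(e_a)=\mathcal{B}_2(e_a)=1_G$ for all $a\in G$.
   Context: A Rota-Baxter system of groups is a triple $(G,\mathcal{B}_1,\mathcal{B}_2)$ where $G$ is a group with identity $1_G$ and $\mathcal{B}_1,\mathcal{B}_2:G\to G$ are maps such that for all $a,b\in G$: $\mathcal{B}_1(a)\mathcal{B}_1(b)=\mathcal{B}_1(\mathcal{B}_1(a)b\mathcal{B}_2(a))$ and $\mathcal{B}_2(b)\mathcal{B}_2(a)=\mathcal{B}_2(\mathcal{B}_1(a)b\mathcal{B}_2(a))$. *)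

theory Defs
  imports "HOL-Algebra.Group"
begin

definition rota_baxter_system :: "('a, 'b) monoid_scheme \<Rightarrow> ('a \<Rightarrow> 'a) \<Rightarrow> ('a \<Rightarrow> 'a) \<Rightarrow> bool" where
  "rota_baxter_system G B1 B2 \<longleftrightarrow> group G \<and>
     B1 \<in> carrier G \<rightarrow> carrier G \<and> B2 \<in> carrier G \<rightarrow> carrier G \<and>
     (\<forall>a\<in>carrier G. \<forall>b\<in>carrier G.
        B1 a \<otimes>\<^bsub>G\<^esub> B1 b = B1 (B1 a \<otimes>\<^bsub>G\<^esub> b \<otimes>\<^bsub>G\<^esub> B2 a) \<and>
        B2 b \<otimes>\<^bsub>G\<^esub> B2 a = B2 (B1 a \<otimes>\<^bsub>G\<^esub> b \<otimes>\<^bsub>G\<^esub> B2 a))"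

definition rb_circ :: "('a, 'b) monoid_scheme \<Rightarrow> ('a \<Rightarrow> 'a) \<Rightarrow> ('a \<Rightarrow> 'a) \<Rightarrow> 'a \<Rightarrow> 'a \<Rightarrow> 'a" where
  "rb_circ G B1 B2 a b = B1 a \<otimes>\<^bsub>G\<^esub> b \<otimes>\<^bsub>G\<^esub> B2 a"

end

theory Submission
  imports Defs
begin

text \<open>Since \<open>B1 a\<close> and \<open>B2 a\<close> are invertible, \<open>x \<mapsto> a \<circ> x\<close> is injective, and
  \<open>e\<^sub>a = B1(a)\<inverse> a B2(a)\<inverse>\<close> is the solution of \<open>a \<circ> e\<^sub>a = a\<close>. Associativity gives
  \<open>a \<circ> (e\<^sub>a \<circ> b) = (a \<circ> e\<^sub>a) \<circ> b = a \<circ> b\<close>, hence \<open>e\<^sub>a \<circ> b = b\<close>. In a Rota-Baxter system,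
  \<open>e\<^sub>a \<circ> 1 = 1\<close> says \<open>B1(e\<^sub>a) B2(e\<^sub>a) = 1\<close>, so the defining identities at \<open>(e\<^sub>a, 1)\<close> read
  \<open>B1(e\<^sub>a) B1(1) = B1(1)\<close> and \<open>B2(1) B2(e\<^sub>a) = B2(1)\<close>.\<close>

definition rb_unit :: "('a, 'b) monoid_scheme \<Rightarrow> ('a \<Rightarrow> 'a) \<Rightarrow> ('a \<Rightarrow> 'a) \<Rightarrow> 'a \<Rightarrow> 'a" where
  "rb_unit G B1 B2 a = inv\<^bsub>G\<^esub> (B1 a) \<otimes>\<^bsub>G\<^esub> a \<otimes>\<^bsub>G\<^esub> inv\<^bsub>G\<^esub> (B2 a)"

context group
begin

lemma rb_circ_closed:
  assumes "B1 \<in> carrier G \<rightarrow> carrier G" "B2 \<in> carrier G \<rightarrow> carrier G"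
    and "a \<in> carrier G" "b \<in> carrier G"
  shows "rb_circ G B1 B2 a b \<in> carrier G"
  using assms unfolding rb_circ_def by auto

lemma rb_unit_closed:
  assumes "B1 \<in> carrier G \<rightarrow> carrier G" "B2 \<in> carrier G \<rightarrow> carrier G" "a \<in> carrier G"
  shows "rb_unit G B1 B2 a \<in> carrier G"
  using assms unfolding rb_unit_def by auto

lemma rb_circ_left_cancel:
  assumes "B1 \<in> carrier G \<rightarrow> carrier G" "B2 \<in> carrier G \<rightarrow> carrier G"
    and "a \<in> carrier G" "x \<in> carrier G" "y \<in> carrier G"
  shows "rb_circ G B1 B2 a x = rb_circ G B1 B2 a y \<longleftrightarrow> x = y"
  using assms unfolding rb_circ_def by (simp add: Pi_iff m_assoc)

lemma rb_circ_rb_unit_right: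
  assumes "B1 \<in> carrier G \<rightarrow> carrier G" "B2 \<in> carrier G \<rightarrow> carrier G" "a \<in> carrier G"
  shows "rb_circ G B1 B2 a (rb_unit G B1 B2 a) = a"
proof -
  have "B1 a \<in> carrier G" "B2 a \<in> carrier G" using assms by auto
  with \<open>a \<in> carrier G\<close> show ?thesis
    unfolding rb_circ_def rb_unit_def
    by (simp add: m_assoc flip: m_assoc[of "B1 a" "inv (B1 a)"])
qed

lemma rb_unit_left_identity:
  assumes B1: "B1 \<in> carrier G \<rightarrow> carrier G" and B2: "B2 \<in> carrier G \<rightarrow> carrier G"
    and assoc: "\<forall>a\<in>carrier G. \<forall>b\<in>carrier G. \<forall>c\<in>carrier G.
       rb_circ G B1 B2 (rb_circ G B1 B2 a b) c = rb_circ G B1 B2 a (rb_circ G B1 B2 b c)"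
    and a: "a \<in> carrier G" and b: "b \<in> carrier G"
  shows "rb_circ G B1 B2 (rb_unit G B1 B2 a) b = b"
proof -
  let ?e = "rb_unit G B1 B2 a"
  have e: "?e \<in> carrier G" using rb_unit_closed[OF B1 B2 a] .
  have "rb_circ G B1 B2 a (rb_circ G B1 B2 ?e b) = rb_circ G B1 B2 (rb_circ G B1 B2 a ?e) b"
    using assoc a e b by simp
  also have "\<dots> = rb_circ G B1 B2 a b"
    using rb_circ_rb_unit_right[OF B1 B2 a] by simp
  finally show ?thesis
    using rb_circ_left_cancel[OF B1 B2 a rb_circ_closed[OF B1 B2 e b] b] by simp
qed

end

lemma rota_baxter_system_B_eq_one:
  assumes rb: "rota_baxter_system G B1 B2" and e: "e \<in> carrier G"
    and e_one: "rb_circ G B1 B2 e \<one>\<^bsub>G\<^esub> = \<one>\<^bsub>G\<^esub>"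
  shows "B1 e = \<one>\<^bsub>G\<^esub>" and "B2 e = \<one>\<^bsub>G\<^esub>"
proof -
  interpret group G using rb unfolding rota_baxter_system_def by simp
  have B1: "B1 \<in> carrier G \<rightarrow> carrier G" and B2: "B2 \<in> carrier G \<rightarrow> carrier G"
    using rb unfolding rota_baxter_system_def by auto
  have "B1 e \<otimes>\<^bsub>G\<^esub> B1 \<one>\<^bsub>G\<^esub> = B1 (rb_circ G B1 B2 e \<one>\<^bsub>G\<^esub>)"
    and "B2 \<one>\<^bsub>G\<^esub> \<otimes>\<^bsub>G\<^esub> B2 e = B2 (rb_circ G B1 B2 e \<one>\<^bsub>G\<^esub>)"
    using rb e unfolding rota_baxter_system_def rb_circ_def by auto
  then have "B1 e \<otimes>\<^bsub>G\<^esub> B1 \<one>\<^bsub>G\<^esub> = \<one>\<^bsub>G\<^esub> \<otimes>\<^bsub>G\<^esub> B1 \<one>\<^bsub>G\<^esub>"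
    and "B2 \<one>\<^bsub>G\<^esub> \<otimes>\<^bsub>G\<^esub> B2 e = B2 \<one>\<^bsub>G\<^esub> \<otimes>\<^bsub>G\<^esub> \<one>\<^bsub>G\<^esub>"
    using e_one B1 B2 by (auto simp: Pi_iff)
  then show "B1 e = \<one>\<^bsub>G\<^esub>" and "B2 e = \<one>\<^bsub>G\<^esub>"
    using B1 B2 e by (simp_all add: Pi_iff)
qed

theorem theorem3p6:
  fixes G :: "('a, 'b) monoid_scheme" and B1 B2 :: "'a \<Rightarrow> 'a"
  assumes grp: "group G"
    and B1: "B1 \<in> carrier G \<rightarrow> carrier G"
    and B2: "B2 \<in> carrier G \<rightarrow> carrier G"
    and assoc: "\<forall>a\<in>carrier G. \<forall>b\<in>carrier G. \<forall>c\<in>carrier G.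
       rb_circ G B1 B2 (rb_circ G B1 B2 a b) c = rb_circ G B1 B2 a (rb_circ G B1 B2 b c)"
  shows "(\<forall>a\<in>carrier G. \<forall>b\<in>carrier G.
            rb_circ G B1 B2 (inv\<^bsub>G\<^esub> (B1 a) \<otimes>\<^bsub>G\<^esub> a \<otimes>\<^bsub>G\<^esub> inv\<^bsub>G\<^esub> (B2 a)) b = b)
       \<and> (rota_baxter_system G B1 B2 \<longrightarrow>
            (\<forall>a\<in>carrier G.
               B1 (inv\<^bsub>G\<^esub> (B1 a) \<otimes>\<^bsub>G\<^esub> a \<otimes>\<^bsub>G\<^esub> inv\<^bsub>G\<^esub> (B2 a)) = \<one>\<^bsub>G\<^esub> \<and>
               B2 (inv\<^bsub>G\<^esub> (B1 a) \<otimes>\<^bsub>G\<^esub> a \<otimes>\<^bsub>G\<^esub> inv\<^bsub>G\<^esub> (B2 a)) = \<one>\<^bsub>G\<^esub>))"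
proof -
  interpret group G by (rule grp)
  have left_identity: "rb_circ G B1 B2 (rb_unit G B1 B2 a) b = b"
    if "a \<in> carrier G" "b \<in> carrier G" for a b
    using rb_unit_left_identity[OF B1 B2 assoc that] .
  have "B1 (rb_unit G B1 B2 a) = \<one>\<^bsub>G\<^esub> \<and> B2 (rb_unit G B1 B2 a) = \<one>\<^bsub>G\<^esub>"
    if "rota_baxter_system G B1 B2" "a \<in> carrier G" for a
    using rota_baxter_system_B_eq_one[OF that(1) rb_unit_closed[OF B1 B2 that(2)]]
      left_identity[OF that(2) one_closed] by simp
  with left_identity show ?thesis unfolding rb_unit_def by simp
qed

end
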